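(* Let ${\bf T}$ be a string of length $N$ over an integer alphabet whose last character ${\bf T}[N]$ is strictly smaller than every other character of ${\bf T}$, and set ${\bf T}[N+1]$ to be a symbol different from all characters of ${\bf T}$. Let $2\le i\le N$ and $t={\bf T}[i]$, and suppose that $\mathrm{suf}(i)$ is either the lexicographically largest L-suffix among all L-suffixes starting with character $t$, or the lexicographically smallest LMS-suffix among all LMS-suffixes starting with character $t$. Then ${\bf T}[i-1]\neq t$. Moreover, with $j=\lfloor i/2\rfloor$, the position $i$ is determined by $j$ and $t$ as follows: if ${\bf T}[2j]\neq {\bf T}[2j+1]$ then $i$ is the unique element of $\{2j,2j+1\}$ with ${\bf T}[i]=t$; otherwise $i=2j$.
   Context: For $1\le i\le N$, $\mathrm{suf}(i)={\bf T}[i\dots N]$. The suffix $\mathrm{suf}(i)$ is an S-suffix if $i=N$ or $\mathrm{suf}(i)$ is lexicographically smaller than $\mathrm{suf}(i+1)$; otherwise it is an L-suffix. An S-suffix $\mathrm{suf}(i)$ is an LMS-suffix if $i>1$ and $\mathrm{suf}(i-1)$ is an L-suffix. *)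

theory Defs
  imports Main
begin

text \<open>Strings are int lists, indexed 1-based: chr T k = T[k] for 1 <= k <= N = length T.
  Position N+1 (and beyond) holds a sentinel s, assumed distinct from all characters of T.\<close>

definition chr :: "int list \<Rightarrow> int \<Rightarrow> nat \<Rightarrow> int" where
  "chr T s k = (if 1 \<le> k \<and> k \<le> length T then T ! (k - 1) else s)"

definition suf :: "int list \<Rightarrow> nat \<Rightarrow> int list" where
  "suf T i = drop (i - 1) T"

text \<open>Strict lexicographic order on strings (a proper prefix is smaller).\<close>
definition lex_less :: "int list \<Rightarrow> int list \<Rightarrow> bool" where
  "lex_less xs ys \<longleftrightarrow> (xs, ys) \<in> lexord {(a, b). a < b}"

definition lex_le :: "int list \<Rightarrow> int list \<Rightarrow> bool" where
  "lex_le xs ys \<longleftrightarrow> xs = ys \<or> lex_less xs ys"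

definition S_suffix :: "int list \<Rightarrow> nat \<Rightarrow> bool" where
  "S_suffix T i \<longleftrightarrow> i = length T \<or> lex_less (suf T i) (suf T (i + 1))"

definition L_suffix :: "int list \<Rightarrow> nat \<Rightarrow> bool" where
  "L_suffix T i \<longleftrightarrow> \<not> S_suffix T i"

definition LMS_suffix :: "int list \<Rightarrow> nat \<Rightarrow> bool" where
  "LMS_suffix T i \<longleftrightarrow> S_suffix T i \<and> i > 1 \<and> L_suffix T (i - 1)"

end

theory Submission
  imports Defs
begin

text \<open>If T[k] = T[k+1] then suf(k) = T[k] suf(k+1) and suf(k+1) = T[k] suf(k+2), so comparing
  suf(k) with suf(k+1) is the same as comparing suf(k+1) with suf(k+2): both suffixes have the
  same type, unless k+1 = N, which the minimality of T[N] rules out. Hence suf(i) cannot be LMS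
  if T[i-1] = t, and if it is an L-suffix then so is suf(i-1), which starts with t and is larger,
  contradicting maximality. Knowing T[i-1] \<noteq> T[i], the position i is recovered from i div 2.\<close>

lemma suf_Cons: "1 \<le> k \<Longrightarrow> k \<le> length T \<Longrightarrow> suf T k = chr T s k # suf T (Suc k)"
  unfolding suf_def chr_def by (cases k) (simp_all add: Cons_nth_drop_Suc)

lemma lex_less_Cons_Cons_iff: "lex_less (a # xs) (a # ys) \<longleftrightarrow> lex_less xs ys"
  unfolding lex_less_def by simp

lemma lex_less_suf_Suc_iff_if_equal_chr:
  assumes "1 \<le> k" "Suc k \<le> length T" "chr T s k = chr T s (Suc k)"
  shows "lex_less (suf T k) (suf T (Suc k)) \<longleftrightarrow> lex_less (suf T (Suc k)) (suf T (Suc (Suc k)))"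
  using assms suf_Cons[of k T s] suf_Cons[of "Suc k" T s] by (simp add: lex_less_Cons_Cons_iff)

lemma S_suffix_iff_S_suffix_Suc_if_equal_chr:
  assumes "1 \<le> k" "Suc k < length T" "chr T s k = chr T s (Suc k)"
  shows "S_suffix T k \<longleftrightarrow> S_suffix T (Suc k)"
  using assms lex_less_suf_Suc_iff_if_equal_chr[of k T s] by (simp add: S_suffix_def)

lemma not_LMS_suffix_if_equal_chr_before:
  assumes "1 \<le> k" "Suc k < length T" "chr T s k = chr T s (Suc k)"
  shows "\<not> LMS_suffix T (Suc k)"
  using S_suffix_iff_S_suffix_Suc_if_equal_chr[OF assms] by (simp add: LMS_suffix_def L_suffix_def)

lemma L_suffix_before_equal_chr_not_smaller:
  assumes "1 \<le> k" "Suc k < length T" "chr T s k = chr T s (Suc k)" "L_suffix T (Suc k)"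
  shows "L_suffix T k \<and> \<not> lex_le (suf T k) (suf T (Suc k))"
proof
  show "L_suffix T k"
    using assms S_suffix_iff_S_suffix_Suc_if_equal_chr[of k T s] by (simp add: L_suffix_def)
  have "length (suf T k) \<noteq> length (suf T (Suc k))"
    using assms(1,2) by (simp add: suf_def)
  then have "suf T k \<noteq> suf T (Suc k)"
    by metis
  moreover have "\<not> lex_less (suf T k) (suf T (Suc k))"
    using assms lex_less_suf_Suc_iff_if_equal_chr[of k T s] by (simp add: L_suffix_def S_suffix_def)
  ultimately show "\<not> lex_le (suf T k) (suf T (Suc k))"
    by (simp add: lex_le_def)
qed

lemma position_from_half:
  fixes c :: "nat \<Rightarrow> 'a"
  assumes "c (i - 1) \<noteq> c i"
  shows "let j = i div 2 in
      (c (2 * j) \<noteq> c (2 * j + 1) \<longrightarrow> i = (THE k. k \<in> {2 * j, 2 * j + 1} \<and> c k = c i)) \<and>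
      (c (2 * j) = c (2 * j + 1) \<longrightarrow> i = 2 * j)"
proof -
  define j where "j = i div 2"
  have i_cases: "i = 2 * j \<or> i = 2 * j + 1"
    unfolding j_def by auto
  have "(THE k. k \<in> {2 * j, 2 * j + 1} \<and> c k = c i) = i"
    if "c (2 * j) \<noteq> c (2 * j + 1)"
    by (rule the_equality) (use i_cases that in auto)
  moreover have "i = 2 * j" if "c (2 * j) = c (2 * j + 1)"
    using i_cases that assms by auto
  ultimately show ?thesis
    unfolding j_def Let_def by auto
qed

lemma chr_before_extremal_suffix_differs:
  assumes i_range: "2 \<le> i" "i < length T"
    and t_def: "t = chr T s i"
    and extremal:
      "(L_suffix T i \<and> (\<forall>k. 1 \<le> k \<and> k \<le> length T \<and> L_suffix T k \<and> chr T s k = t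
                              \<longrightarrow> lex_le (suf T k) (suf T i)))
     \<or> (LMS_suffix T i \<and> (\<forall>k. 1 \<le> k \<and> k \<le> length T \<and> LMS_suffix T k \<and> chr T s k = t
                              \<longrightarrow> lex_le (suf T i) (suf T k)))"
  shows "chr T s (i - 1) \<noteq> t"
proof
  assume "chr T s (i - 1) = t"
  define k where "k = i - 1"
  have i_Suc: "i = Suc k"
    using i_range(1) unfolding k_def by auto
  have equal_chr_at_k: "1 \<le> k" "Suc k < length T" "chr T s k = chr T s (Suc k)"
    using i_range \<open>chr T s (i - 1) = t\<close> t_def i_Suc unfolding k_def by auto
  from extremal show False
  proof
    assume largest_L: "L_suffix T i \<and> (\<forall>k. 1 \<le> k \<and> k \<le> length T \<and> L_suffix T k \<and> chr T s k = t
                              \<longrightarrow> lex_le (suf T k) (suf T i))"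
    have "L_suffix T k \<and> \<not> lex_le (suf T k) (suf T i)"
      using L_suffix_before_equal_chr_not_smaller[OF equal_chr_at_k] largest_L i_Suc by simp
    then show False
      using largest_L equal_chr_at_k t_def i_Suc by auto
  next
    assume "LMS_suffix T i \<and> (\<forall>k. 1 \<le> k \<and> k \<le> length T \<and> LMS_suffix T k \<and> chr T s k = t
                              \<longrightarrow> lex_le (suf T i) (suf T k))"
    then show False
      using not_LMS_suffix_if_equal_chr_before[OF equal_chr_at_k] i_Suc by simp
  qed
qed


theorem mainTheorem4:
  fixes T :: "int list" and s :: int and i :: nat and t :: int
  defines "N \<equiv> length T"
  assumes last_min: "N \<ge> 1" "\<forall>k. 1 \<le> k \<and> k < N \<longrightarrow> chr T s N < chr T s k"
    and sentinel: "s \<notin> set T"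
    and i_range: "2 \<le> i" "i \<le> N"
    and t_def: "t = chr T s i"
    and extremal:
      "(L_suffix T i \<and> (\<forall>k. 1 \<le> k \<and> k \<le> N \<and> L_suffix T k \<and> chr T s k = t
                              \<longrightarrow> lex_le (suf T k) (suf T i)))
     \<or> (LMS_suffix T i \<and> (\<forall>k. 1 \<le> k \<and> k \<le> N \<and> LMS_suffix T k \<and> chr T s k = t
                              \<longrightarrow> lex_le (suf T i) (suf T k)))"
  shows "chr T s (i - 1) \<noteq> t \<and>
    (let j = i div 2 in
      (chr T s (2 * j) \<noteq> chr T s (2 * j + 1)
         \<longrightarrow> i = (THE k. k \<in> {2 * j, 2 * j + 1} \<and> chr T s k = t)) \<and>
      (chr T s (2 * j) = chr T s (2 * j + 1) \<longrightarrow> i = 2 * j))"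
proof -
  have distinct_chr: "chr T s (i - 1) \<noteq> t"
  proof (cases "i = N")
    case True
    then have "chr T s i < chr T s (i - 1)"
      using last_min(2) i_range(1) by simp
    then show ?thesis
      using t_def by simp
  next
    case False
    then show ?thesis
      using chr_before_extremal_suffix_differs[of i T t s] i_range t_def extremal N_def by simp
  qed
  then have "chr T s (i - 1) \<noteq> chr T s i"
    using t_def by simp
  from distinct_chr position_from_half[OF this] show ?thesis
    unfolding t_def by simp
qed

end
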